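(* Let $L\in\mathbb{Z}_{\ge2}$ and $N,P>0$ with $\frac NP\le\frac{L-1}{L}$. Then $C_{L-1}(P,N)\le\frac12\ln\frac{(L-1)P}{LN}$.
   Context: $\mathcal{B}^n(y,r)$ is the closed Euclidean ball of radius $r$ centered at $y$, $\mathcal{B}^n(r)=\mathcal{B}^n(0,r)$. A finite $\mathcal{C}\subseteq\mathcal{B}^n(\sqrt{nP})$ is $(P,N,L-1)$-list-decodable (a $(P,N,L-1)$-multiple packing) if $|\mathcal{C}\cap\mathcal{B}^n(y,\sqrt{nN})|\le L-1$ for every $y\in\mathbb{R}^n$. Rate $R(\mathcal{C})=\frac1n\ln|\mathcal{C}|$. $C_{L-1}(P,N)=\limsup_{n\to\infty}\sup R(\mathcal{C})$ over all $(P,N,L-1)$-list-decodable $\mathcal{C}\subseteq\mathcal{B}^n(\sqrt{nP})$. *)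

theory Defs
  imports "HOL-Analysis.Analysis" "HOL-Library.Liminf_Limsup" "HOL-Library.Extended_Real"
begin

text \<open>Points of R^n are represented as functions nat => real vanishing outside {..<n}.\<close>

definition Rn :: "nat \<Rightarrow> (nat \<Rightarrow> real) set" where
  "Rn n = {x. \<forall>i\<ge>n. x i = 0}"

definition distn :: "nat \<Rightarrow> (nat \<Rightarrow> real) \<Rightarrow> (nat \<Rightarrow> real) \<Rightarrow> real" where
  "distn n x y = sqrt (\<Sum>i<n. (x i - y i)^2)"

definition ballN :: "nat \<Rightarrow> (nat \<Rightarrow> real) \<Rightarrow> real \<Rightarrow> (nat \<Rightarrow> real) set" where
  "ballN n y r = {x \<in> Rn n. distn n x y \<le> r}"

definition list_decodable :: "nat \<Rightarrow> real \<Rightarrow> real \<Rightarrow> nat \<Rightarrow> (nat \<Rightarrow> real) set \<Rightarrow> bool" where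
  "list_decodable n P N K C \<longleftrightarrow>
     finite C \<and> C \<subseteq> ballN n (\<lambda>_. 0) (sqrt (real n * P)) \<and>
     (\<forall>y \<in> Rn n. card (C \<inter> ballN n y (sqrt (real n * N))) \<le> K)"

definition rate :: "nat \<Rightarrow> (nat \<Rightarrow> real) set \<Rightarrow> real" where
  "rate n C = ln (real (card C)) / real n"

definition capacity :: "nat \<Rightarrow> real \<Rightarrow> real \<Rightarrow> ereal" where
  "capacity K P N = limsup (\<lambda>n. SUP C \<in> {C. list_decodable n P N K C}. ereal (rate n C))"

end

theory Submission
  imports Defs "HOL-Library.Ramsey" "HOL-Probability.Distributions"
begin

text \<open>
  Scaling and one extra coordinate map a code in the ball of radius \<open>sqrt (n P)\<close> injectively onto
  the sphere of radius \<open>sqrt m\<close>, \<open>m = n + 1\<close>, with list-decoding radius \<open>sqrt (\<theta> m)\<close>, \<open>\<theta> = N / P\<close>.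

  On the sphere, a cap of squared radius \<open>r m\<close> with \<open>r\<close> slightly below \<open>t = L \<theta> / (L - 1)\<close> contains
  a bounded number \<open>R\<close> of codewords, independently of \<open>m\<close>. Otherwise Ramsey's theorem yields
  either \<open>L\<close> codewords in the cap with pairwise inner products at least \<open>(1 - r - \<epsilon>) m\<close>, and then
  an approximate centre of mass lies within \<open>sqrt (\<theta> m)\<close> of all of them, contradicting
  list-decodability, or arbitrarily many codewords in the cap with smaller pairwise inner
  products, which a Plotkin-type bound forbids.

  Finally the Gaussian weight \<open>exp (- A s |y|\<^sup>2)\<close> is averaged over the caps around the
  codewords. Each cap carries a fraction of roughly \<open>s\<^bsup>m/2\<^esup>\<close> of the total weight, by Chernoff
  bounds for a Gaussian centred at \<open>(1 - s) c\<close>, while no point lies in more than \<open>R\<close> caps.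
  Hence there are at most about \<open>R s\<^bsup>-m/2\<^esup>\<close> codewords, and the rate is at most
  \<open>ln (1 / t) / 2\<close>.
\<close>

section \<open>Inner products on the first \<open>m\<close> coordinates\<close>

definition inner_n :: "nat \<Rightarrow> (nat \<Rightarrow> real) \<Rightarrow> (nat \<Rightarrow> real) \<Rightarrow> real" where
  "inner_n m x y = (\<Sum>i<m. x i * y i)"

definition sqdist_n :: "nat \<Rightarrow> (nat \<Rightarrow> real) \<Rightarrow> (nat \<Rightarrow> real) \<Rightarrow> real" where
  "sqdist_n m x y = (\<Sum>i<m. (x i - y i)\<^sup>2)"

definition lincomb :: "(nat \<Rightarrow> real) set \<Rightarrow> ((nat \<Rightarrow> real) \<Rightarrow> real) \<Rightarrow> nat \<Rightarrow> real" where
  "lincomb U w = (\<lambda>i. \<Sum>c\<in>U. w c * c i)"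

lemma inner_n_commute: "inner_n m x y = inner_n m y x"
  unfolding inner_n_def by (simp add: mult.commute)

lemma inner_n_self_nonneg: "0 \<le> inner_n m x x"
  unfolding inner_n_def by (intro sum_nonneg) simp

lemma sqdist_n_eq_inner_n: "sqdist_n m x y = inner_n m x x - 2 * inner_n m x y + inner_n m y y"
  unfolding sqdist_n_def inner_n_def
  by (simp add: power2_eq_square algebra_simps sum.distrib sum_subtractf sum_distrib_left)

lemma inner_n_Cauchy_Schwarz: "(inner_n m x y)\<^sup>2 \<le> inner_n m x x * inner_n m y y"
  unfolding inner_n_def using Cauchy_Schwarz_ineq_sum[of x y "{..<m}"]
  by (simp add: power2_eq_square)

lemma inner_n_lincomb_left:
  "finite U \<Longrightarrow> inner_n m (lincomb U w) y = (\<Sum>c\<in>U. w c * inner_n m c y)"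
  unfolding inner_n_def lincomb_def
  by (simp add: sum_distrib_left sum_distrib_right mult.assoc) (rule sum.swap)

lemma inner_n_lincomb_self:
  assumes "finite U"
  shows "inner_n m (lincomb U w) (lincomb U w) = (\<Sum>c\<in>U. \<Sum>d\<in>U. w c * w d * inner_n m c d)"
proof -
  have inner_c: "inner_n m c (lincomb U w) = (\<Sum>d\<in>U. w d * inner_n m c d)" for c
    by (simp add: inner_n_commute[of m c] inner_n_lincomb_left[OF assms])
  show ?thesis
    by (simp add: inner_n_lincomb_left[OF assms] inner_c sum_distrib_left mult_ac)
qed

lemma lincomb_transfer:
  assumes "finite U" "c \<in> U" "d \<in> U"
  shows "lincomb U (\<lambda>x. w x + (if x = c then t else 0) - (if x = d then t else 0))
       = (\<lambda>i. lincomb U w i + t * (c i - d i))"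
proof
  fix i
  have "lincomb U (\<lambda>x. w x + (if x = c then t else 0) - (if x = d then t else 0)) i
      = (\<Sum>x\<in>U. w x * x i + (if x = c then t * c i else 0) - (if x = d then t * d i else 0))"
    unfolding lincomb_def by (intro sum.cong) (auto simp: algebra_simps)
  also have "\<dots> = lincomb U w i + t * (c i - d i)"
    using assms by (simp add: lincomb_def sum.distrib sum_subtractf algebra_simps)
  finally show "lincomb U (\<lambda>x. w x + (if x = c then t else 0) - (if x = d then t else 0)) i
      = lincomb U w i + t * (c i - d i)" .
qed

lemma sqdist_n_sphere_le:
  assumes "inner_n m c c = M" "inner_n m d d = M"
  shows "sqdist_n m c d \<le> 4 * M"
proof -
  have "sqdist_n m c d \<le> (\<Sum>i<m. 2 * (c i)\<^sup>2 + 2 * (d i)\<^sup>2)"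
    unfolding sqdist_n_def
  proof (rule sum_mono)
    fix i show "(c i - d i)\<^sup>2 \<le> 2 * (c i)\<^sup>2 + 2 * (d i)\<^sup>2"
      using zero_le_square[of "c i + d i"] by (simp add: power2_eq_square algebra_simps)
  qed
  also have "\<dots> = 2 * inner_n m c c + 2 * inner_n m d d"
    unfolding inner_n_def by (simp add: sum.distrib sum_distrib_left power2_eq_square)
  finally show ?thesis using assms by simp
qed

lemma inner_n_self_add_scaled:
  "inner_n m (\<lambda>i. x i + t * v i) (\<lambda>i. x i + t * v i)
     = inner_n m x x + 2 * t * inner_n m x v + t\<^sup>2 * inner_n m v v"
  unfolding inner_n_def
  by (simp add: power2_eq_square algebra_simps sum.distrib sum_distrib_left)

lemma sqdist_n_scaled:
  "sqdist_n m y (\<lambda>i. \<beta> * c i)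
     = (1 - \<beta>) * sqdist_n m y (\<lambda>i. 0) + \<beta> * sqdist_n m y c - \<beta> * (1 - \<beta>) * inner_n m c c"
proof -
  have "sqdist_n m y (\<lambda>i. \<beta> * c i)
      = (\<Sum>i<m. (1 - \<beta>) * (y i - 0)\<^sup>2 + \<beta> * (y i - c i)\<^sup>2 - \<beta> * (1 - \<beta>) * (c i * c i))"
    unfolding sqdist_n_def by (intro sum.cong refl) (simp add: power2_eq_square algebra_simps)
  also have "\<dots> = (1 - \<beta>) * sqdist_n m y (\<lambda>i. 0) + \<beta> * sqdist_n m y c - \<beta> * (1 - \<beta>) * inner_n m c c"
    unfolding sqdist_n_def inner_n_def by (simp add: sum.distrib sum_subtractf sum_distrib_left)
  finally show ?thesis .
qed

section \<open>Few codewords in a spherical cap\<close>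

lemma double_sum_if_eq:
  fixes f :: "'a \<Rightarrow> real"
  assumes "finite T"
  shows "(\<Sum>c\<in>T. \<Sum>d\<in>T. f c * f d * (if c = d then M else \<rho>))
       = \<rho> * (\<Sum>c\<in>T. f c)\<^sup>2 + (M - \<rho>) * (\<Sum>c\<in>T. (f c)\<^sup>2)"
proof -
  have row: "(\<Sum>d\<in>T. f c * f d * (if c = d then M else \<rho>)) = \<rho> * f c * (\<Sum>d\<in>T. f d) + (M - \<rho>) * (f c)\<^sup>2"
    if "c \<in> T" for c
  proof -
    have "(\<Sum>d\<in>T. f c * f d * (if c = d then M else \<rho>))
        = (\<Sum>d\<in>T. \<rho> * f c * f d + (if c = d then (M - \<rho>) * f c * f d else 0))"
      by (intro sum.cong) (auto simp: algebra_simps)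
    also have "\<dots> = \<rho> * f c * (\<Sum>d\<in>T. f d) + (M - \<rho>) * (f c)\<^sup>2"
      using assms that by (simp add: sum.distrib sum_distrib_left power2_eq_square)
    finally show ?thesis .
  qed
  have "(\<Sum>c\<in>T. \<Sum>d\<in>T. f c * f d * (if c = d then M else \<rho>))
      = (\<Sum>c\<in>T. \<rho> * f c * (\<Sum>d\<in>T. f d) + (M - \<rho>) * (f c)\<^sup>2)"
    by (rule sum.cong[OF refl row])
  also have "\<dots> = \<rho> * (\<Sum>c\<in>T. f c)\<^sup>2 + (M - \<rho>) * (\<Sum>c\<in>T. (f c)\<^sup>2)"
    by (simp add: sum.distrib sum_distrib_left sum_distrib_right power2_eq_square mult_ac)
  finally show ?thesis .
qed

lemma sum_power2_ge_inverse_card: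
  fixes \<mu> :: "'a \<Rightarrow> real"
  assumes "finite U" "U \<noteq> {}" "(\<Sum>c\<in>U. \<mu> c) = 1"
  shows "1 / card U \<le> (\<Sum>c\<in>U. (\<mu> c)\<^sup>2)"
proof -
  define L where "L = real (card U)"
  have L: "L > 0" using assms by (simp add: L_def card_gt_0_iff)
  have "0 \<le> (\<Sum>c\<in>U. (\<mu> c - 1 / L)\<^sup>2)" by (intro sum_nonneg) auto
  also have "\<dots> = (\<Sum>c\<in>U. (\<mu> c)\<^sup>2 - (2 / L) * \<mu> c + (1 / L)\<^sup>2)"
    by (intro sum.cong) (simp_all add: power2_eq_square algebra_simps)
  also have "\<dots> = (\<Sum>c\<in>U. (\<mu> c)\<^sup>2) - 2 / L * (\<Sum>c\<in>U. \<mu> c) + L * (1 / L)\<^sup>2"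
    by (simp add: sum.distrib sum_subtractf sum_distrib_left L_def)
  also have "\<dots> = (\<Sum>c\<in>U. (\<mu> c)\<^sup>2) - 1 / L"
    using L assms(3) by (simp add: power2_eq_square field_simps)
  finally show ?thesis by (simp add: L_def)
qed

lemma inner_n_sum_self_le:
  assumes fin: "finite T"
    and sphere: "\<And>c. c \<in> T \<Longrightarrow> inner_n m c c = M"
    and far: "\<And>c d. c \<in> T \<Longrightarrow> d \<in> T \<Longrightarrow> c \<noteq> d \<Longrightarrow> inner_n m c d \<le> \<rho>"
  shows "inner_n m (lincomb T (\<lambda>_. 1)) (lincomb T (\<lambda>_. 1))
    \<le> \<rho> * (real (card T))\<^sup>2 + (M - \<rho>) * card T"
proof -
  have "inner_n m (lincomb T (\<lambda>_. 1)) (lincomb T (\<lambda>_. 1))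
      \<le> (\<Sum>c\<in>T. \<Sum>d\<in>T. 1 * 1 * (if c = d then M else \<rho>))"
    unfolding inner_n_lincomb_self[OF fin] using sphere far by (intro sum_mono) auto
  also have "\<dots> = \<rho> * (real (card T))\<^sup>2 + (M - \<rho>) * card T"
    by (subst double_sum_if_eq[OF fin]) simp
  finally show ?thesis .
qed

text \<open>The sum of the points is short because their pairwise inner products are small, yet it
  has a large inner product with the centre \<open>y\<close> of the cap.\<close>

lemma plotkin_cap_bound:
  fixes r \<epsilon> :: real
  assumes fin: "finite T" and ne: "T \<noteq> {}" and r: "r < 1"
    and sphere: "\<And>c. c \<in> T \<Longrightarrow> inner_n m c c = m"
    and near: "\<And>c. c \<in> T \<Longrightarrow> sqdist_n m y c \<le> r * m"
    and far: "\<And>c d. c \<in> T \<Longrightarrow> d \<in> T \<Longrightarrow> c \<noteq> d \<Longrightarrow> inner_n m c d \<le> (1 - r - \<epsilon>) * m"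
    and m: "m > 0"
  shows "(real (card T) - 1) * \<epsilon> \<le> r"
proof -
  define k where "k = real (card T)"
  define s where "s = lincomb T (\<lambda>_. 1)"
  define Y where "Y = inner_n m y y"
  define \<rho> where "\<rho> = (1 - r - \<epsilon>) * m"
  define \<gamma> where "\<gamma> = ((1 - r) * m + Y) / 2"
  have k: "k \<ge> 1" using ne fin by (simp add: k_def Suc_leI card_gt_0_iff)
  have Y: "Y \<ge> 0" unfolding Y_def by (rule inner_n_self_nonneg)
  have "(1 - r) * m > 0" using r m by simp
  then have \<gamma>: "\<gamma> > 0" using Y by (simp add: \<gamma>_def)
  have short: "inner_n m s s \<le> \<rho> * k\<^sup>2 + (m - \<rho>) * k"
    unfolding s_def k_def \<rho>_def using sphere far by (intro inner_n_sum_self_le[OF fin]) auto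
  have "(\<Sum>c\<in>T. \<gamma>) \<le> (\<Sum>c\<in>T. 1 * inner_n m c y)"
  proof (rule sum_mono)
    fix c assume "c \<in> T"
    then show "\<gamma> \<le> 1 * inner_n m c y"
      using near[of c] sphere[of c] sqdist_n_eq_inner_n[of m y c]
      by (simp add: \<gamma>_def Y_def inner_n_commute algebra_simps)
  qed
  then have long: "k * \<gamma> \<le> inner_n m s y"
    by (simp add: s_def inner_n_lincomb_left[OF fin] k_def)
  have "k\<^sup>2 * \<gamma>\<^sup>2 \<le> (inner_n m s y)\<^sup>2"
    using long k \<gamma> by (metis power_mono power_mult_distrib mult_nonneg_nonneg less_imp_le
        order_trans zero_le_one)
  also have "\<dots> \<le> (\<rho> * k\<^sup>2 + (m - \<rho>) * k) * Y"
    using inner_n_Cauchy_Schwarz[of m s y] short Y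
    by (metis Y_def mult_right_mono order_trans)
  finally have chain: "k\<^sup>2 * \<gamma>\<^sup>2 \<le> (\<rho> * k\<^sup>2 + (m - \<rho>) * k) * Y" .
  \<comment> \<open>AM-GM\<close>
  have amgm: "(1 - r) * m * Y \<le> \<gamma>\<^sup>2"
    using zero_le_square[of "(1 - r) * m - Y"] by (simp add: \<gamma>_def power2_eq_square field_simps)
  have "Y > 0"
    using chain \<gamma> k Y by (smt (verit) mult_eq_0_iff mult_pos_pos zero_less_power)
  have "k * (k * ((1 - r) * m)) * Y \<le> k * (\<rho> * k + (m - \<rho>)) * Y"
    using chain mult_left_mono[OF amgm, of "k\<^sup>2"] k
    by (simp add: power2_eq_square algebra_simps)
  then have "k * ((1 - r) * m) \<le> \<rho> * k + (m - \<rho>)"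
    using k \<open>Y > 0\<close> by (simp add: mult_le_cancel_right mult_le_cancel_left)
  then have "(k - 1) * \<epsilon> * m \<le> r * m" by (simp add: \<rho>_def algebra_simps)
  then show ?thesis using m by (simp add: k_def)
qed

definition simplex_grid :: "'a set \<Rightarrow> nat \<Rightarrow> ('a \<Rightarrow> nat) set" where
  "simplex_grid U K = {w \<in> U \<rightarrow>\<^sub>E {..K}. sum w U = K}"

definition grid_point :: "(nat \<Rightarrow> real) set \<Rightarrow> nat \<Rightarrow> ((nat \<Rightarrow> real) \<Rightarrow> nat) \<Rightarrow> nat \<Rightarrow> real" where
  "grid_point U K w = lincomb U (\<lambda>c. real (w c) / K)"

lemma finite_simplex_grid: "finite U \<Longrightarrow> finite (simplex_grid U K)"
  unfolding simplex_grid_def by (rule finite_subset[OF _ finite_PiE[of U "\<lambda>_. {..K}"]]) auto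

lemma simplex_grid_nonempty:
  assumes "finite U" "c \<in> U"
  shows "simplex_grid U K \<noteq> {}"
proof -
  have "restrict (\<lambda>x. if x = c then K else 0) U \<in> simplex_grid U K"
    using assms by (simp add: simplex_grid_def)
  then show ?thesis by blast
qed

lemma simplex_grid_move:
  assumes fin: "finite U" and w: "w \<in> simplex_grid U K" and K: "K > 0"
    and cd: "c \<in> U" "d \<in> U" "c \<noteq> d" "w d \<ge> 1"
  shows "w(c := w c + 1, d := w d - 1) \<in> simplex_grid U K"
    and "grid_point U K (w(c := w c + 1, d := w d - 1))
       = (\<lambda>i. grid_point U K w i + (1 / K) * (c i - d i))"
proof -
  define w' where "w' = w(c := w c + 1, d := w d - 1)"
  have w'_eq: "real (w' x) = real (w x) + (if x = c then 1 else 0) - (if x = d then 1 else 0)" for x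
    using cd by (auto simp: w'_def)
  have wU: "w \<in> U \<rightarrow>\<^sub>E {..K}" and wsum: "sum w U = K"
    using w by (auto simp: simplex_grid_def)
  have "sum w {c, d} \<le> sum w U" using cd fin by (intro sum_mono2) auto
  then have "w c + 1 \<le> K" using cd wsum by simp
  then have w'U: "w' \<in> U \<rightarrow>\<^sub>E {..K}"
    using wU cd by (auto simp: w'_def PiE_def Pi_def extensional_def)
  have "real (sum w' U) = (\<Sum>x\<in>U. real (w x) + (if x = c then 1 else 0) - (if x = d then 1 else 0))"
    by (simp add: w'_eq)
  also have "\<dots> = real (sum w U)"
    using fin cd by (simp add: sum.distrib sum_subtractf)
  finally have "sum w' U = K" using wsum by linarith
  with w'U show "w' \<in> simplex_grid U K" by (simp add: simplex_grid_def)
  have "(\<lambda>x. real (w' x) / K)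
      = (\<lambda>x. real (w x) / K + (if x = c then 1 / K else 0) - (if x = d then 1 / K else 0))"
    by (auto simp: w'_eq add_divide_distrib diff_divide_distrib)
  then show "grid_point U K w' = (\<lambda>i. grid_point U K w i + (1 / K) * (c i - d i))"
    unfolding grid_point_def using lincomb_transfer[OF fin cd(1,2)] by simp
qed

context
  fixes U :: "(nat \<Rightarrow> real) set" and K m :: nat and M :: real and w
  assumes fin: "finite U" and K: "K > 0"
    and sphere: "\<And>c. c \<in> U \<Longrightarrow> inner_n m c c = M"
    and w: "w \<in> simplex_grid U K"
    and min: "\<And>w'. w' \<in> simplex_grid U K \<Longrightarrow>
      inner_n m (grid_point U K w) (grid_point U K w) \<le> inner_n m (grid_point U K w') (grid_point U K w')"
begin

text \<open>First-order optimality of a grid minimiser of the norm: moving weight \<open>1/K\<close>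
  from \<open>d\<close> to \<open>c\<close> cannot decrease the norm.\<close>

lemma grid_minimiser_step:
  assumes cd: "c \<in> U" "d \<in> U" "c \<noteq> d" "w d \<ge> 1"
  shows "inner_n m (grid_point U K w) d - 2 * M / K \<le> inner_n m (grid_point U K w) c"
proof -
  define z where "z = grid_point U K w"
  have "inner_n m z z \<le> inner_n m (\<lambda>i. z i + (1 / K) * (c i - d i)) (\<lambda>i. z i + (1 / K) * (c i - d i))"
    using min[OF simplex_grid_move(1)[OF fin w K cd]] simplex_grid_move(2)[OF fin w K cd]
    by (simp add: z_def)
  also have "\<dots> = inner_n m z z + 2 * (1 / K) * (inner_n m z c - inner_n m z d)
      + (1 / K)\<^sup>2 * sqdist_n m c d"
    unfolding inner_n_self_add_scaled
    by (simp add: inner_n_def sqdist_n_def sum_subtractf right_diff_distrib power2_eq_square)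
  also have "sqdist_n m c d \<le> 4 * M" using sphere cd by (intro sqdist_n_sphere_le) auto
  finally have "0 \<le> (2 * (1 / K) * (inner_n m z c - inner_n m z d) + (1 / K)\<^sup>2 * (4 * M)) * (K / 2)"
    using K by simp
  also have "\<dots> = inner_n m z c - inner_n m z d + 2 * M / K"
    using K by (simp add: field_simps power2_eq_square)
  finally show ?thesis by (simp add: z_def)
qed

lemma grid_minimiser_inner_n_ge:
  assumes c: "c \<in> U"
  shows "inner_n m (grid_point U K w) (grid_point U K w) - 2 * M / K \<le> inner_n m (grid_point U K w) c"
proof -
  define z where "z = grid_point U K w"
  define \<mu> where "\<mu> x = real (w x) / K" for x
  have "sum w U = K" using w by (simp add: simplex_grid_def)
  then have \<mu>_sum: "(\<Sum>x\<in>U. \<mu> x) = 1"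
    using K by (simp add: \<mu>_def sum_divide_distrib[symmetric] of_nat_sum[symmetric])
  have "M \<ge> 0" using sphere[OF c] inner_n_self_nonneg by metis
  have zz: "inner_n m z z = (\<Sum>d\<in>U. \<mu> d * inner_n m z d)"
    by (simp add: z_def grid_point_def inner_n_lincomb_left[OF fin] \<mu>_def inner_n_commute)
  have "inner_n m z c - inner_n m z z = (\<Sum>d\<in>U. \<mu> d * (inner_n m z c - inner_n m z d))"
    using \<mu>_sum by (simp add: zz sum_subtractf right_diff_distrib sum_distrib_right[symmetric])
  also have "\<dots> \<ge> (\<Sum>d\<in>U. \<mu> d * (- 2 * M / K))"
  proof (rule sum_mono)
    fix d assume d: "d \<in> U"
    show "\<mu> d * (- 2 * M / K) \<le> \<mu> d * (inner_n m z c - inner_n m z d)"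
    proof (cases "c = d \<or> w d = 0")
      case True
      then show ?thesis using \<open>M \<ge> 0\<close> K by (auto simp: \<mu>_def)
    next
      case False
      then show ?thesis
        using grid_minimiser_step[OF c d] by (intro mult_left_mono) (auto simp: \<mu>_def z_def)
    qed
  qed
  also have "(\<Sum>d\<in>U. \<mu> d * (- 2 * M / K)) = - 2 * M / K"
    by (subst sum_distrib_right[symmetric]) (simp add: \<mu>_sum)
  finally show ?thesis by (simp add: z_def)
qed

end

lemma inner_n_convex_lincomb_self_ge:
  assumes fin: "finite U" and ne: "U \<noteq> {}"
    and \<mu>: "\<And>c. c \<in> U \<Longrightarrow> 0 \<le> \<mu> c" "(\<Sum>c\<in>U. \<mu> c) = 1"
    and sphere: "\<And>c. c \<in> U \<Longrightarrow> inner_n m c c = M"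
    and close: "\<And>c d. c \<in> U \<Longrightarrow> d \<in> U \<Longrightarrow> c \<noteq> d \<Longrightarrow> \<rho> \<le> inner_n m c d"
    and \<rho>: "\<rho> \<le> M"
  shows "\<rho> + (M - \<rho>) / card U \<le> inner_n m (lincomb U \<mu>) (lincomb U \<mu>)"
proof -
  have "\<rho> + (M - \<rho>) * (1 / card U) \<le> \<rho> + (M - \<rho>) * (\<Sum>c\<in>U. (\<mu> c)\<^sup>2)"
    using sum_power2_ge_inverse_card[OF fin ne \<mu>(2)] \<rho> by (intro add_left_mono mult_left_mono) auto
  also have "\<dots> = (\<Sum>c\<in>U. \<Sum>d\<in>U. \<mu> c * \<mu> d * (if c = d then M else \<rho>))"
    using double_sum_if_eq[OF fin, of \<mu> M \<rho>] \<mu>(2) by simp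
  also have "\<dots> \<le> (\<Sum>c\<in>U. \<Sum>d\<in>U. \<mu> c * \<mu> d * inner_n m c d)"
    using sphere close \<mu>(1) by (intro sum_mono mult_left_mono) auto
  also have "\<dots> = inner_n m (lincomb U \<mu>) (lincomb U \<mu>)"
    by (rule inner_n_lincomb_self[OF fin, symmetric])
  finally show ?thesis by simp
qed

text \<open>The centre is a minimiser of the norm over a grid in the simplex of convex combinations,
  which avoids a compactness argument.\<close>

lemma exists_near_centre:
  fixes K :: nat and M \<rho> :: real
  assumes fin: "finite U" and ne: "U \<noteq> {}" and K: "K > 0"
    and sphere: "\<And>c. c \<in> U \<Longrightarrow> inner_n m c c = M"
    and close: "\<And>c d. c \<in> U \<Longrightarrow> d \<in> U \<Longrightarrow> c \<noteq> d \<Longrightarrow> \<rho> \<le> inner_n m c d"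
    and \<rho>: "\<rho> \<le> M"
  obtains z where "\<And>c. c \<in> U \<Longrightarrow> sqdist_n m c z \<le> (M - \<rho>) * (1 - 1 / card U) + 4 * M / K"
proof -
  define F where "F w = inner_n m (grid_point U K w) (grid_point U K w)" for w
  define w where "w = arg_min_on F (simplex_grid U K)"
  define z where "z = grid_point U K w"
  define \<mu> where "\<mu> x = real (w x) / K" for x
  obtain c0 where "c0 \<in> U" using ne by blast
  then have grid: "finite (simplex_grid U K)" "simplex_grid U K \<noteq> {}"
    using fin by (simp_all add: finite_simplex_grid simplex_grid_nonempty)
  have w: "w \<in> simplex_grid U K" unfolding w_def by (rule arg_min_if_finite(1)[OF grid])
  have min: "F w \<le> F w'" if "w' \<in> simplex_grid U K" for w'
    unfolding w_def by (rule arg_min_least[OF grid that])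
  have "sum w U = K" using w by (simp add: simplex_grid_def)
  then have \<mu>_sum: "(\<Sum>x\<in>U. \<mu> x) = 1"
    using K by (simp add: \<mu>_def sum_divide_distrib[symmetric] of_nat_sum[symmetric])
  have zz: "\<rho> + (M - \<rho>) / card U \<le> inner_n m z z"
    unfolding z_def grid_point_def \<mu>_def[symmetric]
    by (rule inner_n_convex_lincomb_self_ge[OF fin ne _ \<mu>_sum sphere close \<rho>]) (simp add: \<mu>_def)
  show ?thesis
  proof
    fix c assume c: "c \<in> U"
    have "sqdist_n m c z = M - 2 * inner_n m z c + inner_n m z z"
      using sqdist_n_eq_inner_n[of m c z] sphere[OF c] by (simp add: inner_n_commute)
    also have "\<dots> \<le> M - inner_n m z z + 4 * M / K"
      using grid_minimiser_inner_n_ge[OF fin K sphere w min[unfolded F_def] c] by (simp add: z_def)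
    also have "\<dots> \<le> (M - \<rho>) * (1 - 1 / card U) + 4 * M / K"
      using zz by (simp add: algebra_simps)
    finally show "sqdist_n m c z \<le> (M - \<rho>) * (1 - 1 / card U) + 4 * M / K" .
  qed
qed

lemma clique_near_centre:
  fixes r \<epsilon> \<theta> :: real
  assumes fin: "finite U" and U: "card U = L" "L \<ge> 1"
    and sphere: "\<And>c. c \<in> U \<Longrightarrow> inner_n m c c = m"
    and close: "\<And>c d. c \<in> U \<Longrightarrow> d \<in> U \<Longrightarrow> c \<noteq> d \<Longrightarrow> (1 - r - \<epsilon>) * m \<le> inner_n m c d"
    and r\<epsilon>: "0 \<le> r + \<epsilon>" and \<theta>: "(real L - 1) / L * (r + \<epsilon>) < \<theta>"
  obtains z where "\<And>c. c \<in> U \<Longrightarrow> sqdist_n m c z \<le> \<theta> * m"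
proof -
  obtain K :: nat where K: "4 / (\<theta> - (real L - 1) / L * (r + \<epsilon>)) < K"
    using reals_Archimedean2 by blast
  then have "K > 0" using \<theta> by (auto intro: ccontr)
  have K_\<theta>: "(real L - 1) / L * (r + \<epsilon>) + 4 / K \<le> \<theta>"
    using K \<theta> \<open>K > 0\<close> by (simp add: field_simps)
  have "U \<noteq> {}" using U by auto
  have "0 \<le> (r + \<epsilon>) * m" using r\<epsilon> by simp
  then have "(1 - r - \<epsilon>) * m \<le> m" by (simp add: algebra_simps)
  then obtain z where z: "\<And>c. c \<in> U \<Longrightarrow>
      sqdist_n m c z \<le> (m - (1 - r - \<epsilon>) * m) * (1 - 1 / card U) + 4 * real m / K"
    using exists_near_centre[OF fin \<open>U \<noteq> {}\<close> \<open>K > 0\<close> sphere close] by blast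
  have "(m - (1 - r - \<epsilon>) * m) * (1 - 1 / card U) + 4 * real m / K
      = ((real L - 1) / L * (r + \<epsilon>) + 4 / K) * m"
    using U by (simp add: field_simps)
  also have "\<dots> \<le> \<theta> * m" using K_\<theta> by (intro mult_right_mono) auto
  finally show ?thesis using z that order_trans by blast
qed

text \<open>By Ramsey's theorem, enough codewords in the cap contain either \<open>L\<close> codewords with large
  pairwise inner products, which lie close to a common centre and so violate list-decodability,
  or many codewords with small pairwise inner products, which the Plotkin-type bound forbids.\<close>

lemma card_cap_bounded:
  fixes r \<epsilon> \<theta> :: real and L :: nat
  assumes L: "L \<ge> 1" and r: "0 \<le> r" "r < 1" and \<epsilon>: "\<epsilon> > 0"
    and \<theta>: "(real L - 1) / L * (r + \<epsilon>) < \<theta>"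
  obtains R :: nat where
    "\<And>m S y. m > 0 \<Longrightarrow> finite S \<Longrightarrow> (\<And>c. c \<in> S \<Longrightarrow> inner_n m c c = m) \<Longrightarrow>
       (\<And>z. card {c\<in>S. sqdist_n m c z \<le> \<theta> * m} \<le> L - 1) \<Longrightarrow>
       card {c\<in>S. sqdist_n m y c \<le> r * m} < R"
proof -
  obtain k :: nat where k: "1 / \<epsilon> + 1 < k" using reals_Archimedean2 by blast
  have "0 < 1 / \<epsilon>" using \<epsilon> by simp
  with k have "1 < real k" by linarith
  with k have k: "r < (real k - 1) * \<epsilon>" "k \<noteq> 0"
    using \<epsilon> r by (auto simp: field_simps)
  obtain R where R: "\<And>V E. finite (V :: (nat \<Rightarrow> real) set) \<Longrightarrow> R \<le> card V \<Longrightarrow>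
      \<exists>U\<subseteq>V. card U = L \<and> clique U E \<or> card U = k \<and> indep U E"
    using ramsey2[of L k] by blast
  show thesis
  proof (rule that[of R])
    fix m S y
    assume m: "m > 0" and fin: "finite S" and sphere: "\<And>c. c \<in> S \<Longrightarrow> inner_n m c c = m"
      and list: "\<And>z. card {c\<in>S. sqdist_n m c z \<le> \<theta> * m} \<le> L - 1"
    define T where "T = {c\<in>S. sqdist_n m y c \<le> r * m}"
    define E where "E = {{c, d} | c d. (1 - r - \<epsilon>) * m \<le> inner_n m c d}"
    have E: "{c, d} \<in> E \<longleftrightarrow> (1 - r - \<epsilon>) * m \<le> inner_n m c d" for c d
      by (auto simp: E_def doubleton_eq_iff inner_n_commute)
    show "card T < R"
    proof (rule ccontr)
      assume "\<not> card T < R"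
      then obtain U where "U \<subseteq> T" and UR: "card U = L \<and> clique U E \<or> card U = k \<and> indep U E"
        using R[of T] fin by (auto simp: T_def)
      have "U \<subseteq> S" using \<open>U \<subseteq> T\<close> by (auto simp: T_def)
      then have finU: "finite U" using fin finite_subset by blast
      from UR show False
      proof
        assume U: "card U = L \<and> clique U E"
        have sphere_U: "inner_n m c c = m" if "c \<in> U" for c
          using sphere \<open>U \<subseteq> S\<close> that by auto
        have close_U: "(1 - r - \<epsilon>) * m \<le> inner_n m c d" if "c \<in> U" "d \<in> U" "c \<noteq> d" for c d
          using U that by (auto simp: clique_def E)
        have "0 \<le> r + \<epsilon>" using r \<epsilon> by simp
        then obtain z where "\<And>c. c \<in> U \<Longrightarrow> sqdist_n m c z \<le> \<theta> * m"
          using clique_near_centre[OF finU _ L sphere_U close_U _ \<theta>] U by blast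
        then have "card U \<le> card {c\<in>S. sqdist_n m c z \<le> \<theta> * m}"
          using fin \<open>U \<subseteq> S\<close> by (intro card_mono) auto
        then show False using list[of z] U L by linarith
      next
        assume U: "card U = k \<and> indep U E"
        then have "U \<noteq> {}" using k by auto
        have "(real (card U) - 1) * \<epsilon> \<le> r"
        proof (rule plotkin_cap_bound[OF finU \<open>U \<noteq> {}\<close> r(2) _ _ _ m, where y = y])
          show "inner_n m c c = m" if "c \<in> U" for c
            using sphere \<open>U \<subseteq> S\<close> that by auto
          show "sqdist_n m y c \<le> r * m" if "c \<in> U" for c
            using \<open>U \<subseteq> T\<close> that by (auto simp: T_def)
          show "inner_n m c d \<le> (1 - r - \<epsilon>) * m" if "c \<in> U" "d \<in> U" "c \<noteq> d" for c d
            using U that by (force simp: indep_def E)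
        qed
        then show False using U k by simp
      qed
    qed
  qed
qed

section \<open>Gaussian integrals\<close>

lemma nn_integral_exp_quadratic:
  fixes A B C :: real
  assumes A: "A > 0"
  shows "(\<integral>\<^sup>+x. ennreal (exp (- A * x\<^sup>2 + B * x + C)) \<partial>lborel)
       = ennreal (sqrt (pi / A) * exp (B\<^sup>2 / (4 * A) + C))"
proof -
  define \<sigma> where "\<sigma> = 1 / sqrt (2 * A)"
  define \<mu> where "\<mu> = B / (2 * A)"
  have \<sigma>: "\<sigma> > 0" and \<sigma>2: "2 * \<sigma>\<^sup>2 = 1 / A"
    using A by (simp_all add: \<sigma>_def power_divide)
  have "2 * pi * \<sigma>\<^sup>2 = pi / A" using \<sigma>2 by (simp add: field_simps)
  then have norm: "sqrt (2 * pi * \<sigma>\<^sup>2) = sqrt (pi / A)" by simp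
  have density: "exp (- A * x\<^sup>2 + B * x + C)
      = sqrt (pi / A) * exp (B\<^sup>2 / (4 * A) + C) * normal_density \<mu> \<sigma> x" for x
  proof -
    have "- A * x\<^sup>2 + B * x + C = B\<^sup>2 / (4 * A) + C + (- (x - \<mu>)\<^sup>2 / (2 * \<sigma>\<^sup>2))"
      using A unfolding \<sigma>2 \<mu>_def by (simp add: field_simps power2_eq_square)
    then have "exp (- A * x\<^sup>2 + B * x + C)
        = exp (B\<^sup>2 / (4 * A) + C) * exp (- (x - \<mu>)\<^sup>2 / (2 * \<sigma>\<^sup>2))"
      by (simp only: exp_add)
    then show ?thesis
      unfolding normal_density_def norm using A by simp
  qed
  have "(\<integral>\<^sup>+x. ennreal (exp (- A * x\<^sup>2 + B * x + C)) \<partial>lborel)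
      = (\<integral>\<^sup>+x. ennreal (sqrt (pi / A) * exp (B\<^sup>2 / (4 * A) + C)) * ennreal (normal_density \<mu> \<sigma> x) \<partial>lborel)"
    by (intro nn_integral_cong, simp only: density, rule ennreal_mult)
      (use A in auto)
  also have "\<dots> = ennreal (sqrt (pi / A) * exp (B\<^sup>2 / (4 * A) + C))
      * (\<integral>\<^sup>+x. ennreal (normal_density \<mu> \<sigma> x) \<partial>lborel)"
    by (rule nn_integral_cmult) simp
  also have "(\<integral>\<^sup>+x. ennreal (normal_density \<mu> \<sigma> x) \<partial>lborel) = 1"
    using \<sigma> by (subst nn_integral_eq_integral) auto
  finally show ?thesis by simp
qed

abbreviation lborel_n :: "nat \<Rightarrow> (nat \<Rightarrow> real) measure" where
  "lborel_n m \<equiv> PiM {..<m} (\<lambda>_. lborel)"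

lemma measurable_sqdist_n [measurable]: "(\<lambda>y. sqdist_n m y c) \<in> borel_measurable (lborel_n m)"
  unfolding sqdist_n_def by measurable

lemma nn_integral_exp_quadratic_n:
  fixes A :: real and B C :: "nat \<Rightarrow> real"
  assumes A: "A > 0"
  shows "(\<integral>\<^sup>+y. ennreal (exp (\<Sum>i<m. - A * (y i)\<^sup>2 + B i * y i + C i)) \<partial>lborel_n m)
       = ennreal (sqrt (pi / A) ^ m * exp (\<Sum>i<m. (B i)\<^sup>2 / (4 * A) + C i))"
proof -
  interpret product_sigma_finite "\<lambda>_::nat. lborel :: real measure"
    by unfold_locales
  have "(\<integral>\<^sup>+y. ennreal (exp (\<Sum>i<m. - A * (y i)\<^sup>2 + B i * y i + C i)) \<partial>lborel_n m)
      = (\<integral>\<^sup>+y. (\<Prod>i<m. (\<lambda>i x. ennreal (exp (- A * x\<^sup>2 + B i * x + C i))) i (y i)) \<partial>lborel_n m)"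
    by (intro nn_integral_cong) (simp add: exp_sum prod_ennreal)
  also have "\<dots> = (\<Prod>i<m. \<integral>\<^sup>+x. ennreal (exp (- A * x\<^sup>2 + B i * x + C i)) \<partial>lborel)"
    by (rule product_nn_integral_prod) auto
  also have "\<dots> = (\<Prod>i<m. ennreal (sqrt (pi / A) * exp ((B i)\<^sup>2 / (4 * A) + C i)))"
    by (intro prod.cong refl) (rule nn_integral_exp_quadratic[OF A])
  also have "\<dots> = ennreal (\<Prod>i<m. sqrt (pi / A) * exp ((B i)\<^sup>2 / (4 * A) + C i))"
    by (rule prod_ennreal) (use A in simp)
  also have "(\<Prod>i<m. sqrt (pi / A) * exp ((B i)\<^sup>2 / (4 * A) + C i))
      = sqrt (pi / A) ^ m * exp (\<Sum>i<m. (B i)\<^sup>2 / (4 * A) + C i)"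
    by (simp add: prod.distrib exp_sum)
  finally show ?thesis .
qed

lemma nn_integral_exp_sqnorm_n:
  assumes "a > 0"
  shows "(\<integral>\<^sup>+y. ennreal (exp (- a * sqdist_n m y (\<lambda>_. 0))) \<partial>lborel_n m) = ennreal (sqrt (pi / a) ^ m)"
  using nn_integral_exp_quadratic_n[OF assms, of m "\<lambda>_. 0" "\<lambda>_. 0"]
  by (simp add: sqdist_n_def sum_distrib_left sum_negf)

text \<open>The exponential moments of \<open>|y - c|\<^sup>2\<close> under the Gaussian centred at \<open>\<beta> c\<close>.\<close>

lemma nn_integral_exp_sqdist_n:
  fixes A l \<beta> \<theta> :: real
  assumes A: "l < A" and c: "inner_n m c c = m"
  shows "(\<integral>\<^sup>+y. ennreal (exp (- A * sqdist_n m y (\<lambda>i. \<beta> * c i) + l * (sqdist_n m y c - \<theta> * m))) \<partial>lborel_n m)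
       = ennreal (sqrt (pi / (A - l)) ^ m * exp (m * (A * l * (1 - \<beta>)\<^sup>2 / (A - l) - l * \<theta>)))"
proof -
  define A' where "A' = A - l"
  have A': "A' > 0" using A by (simp add: A'_def)
  define B where "B i = (2 * A * \<beta> - 2 * l) * c i" for i
  define C where "C i = (l - A * \<beta>\<^sup>2) * (c i)\<^sup>2 - l * \<theta>" for i
  have exponent: "- A * sqdist_n m y (\<lambda>i. \<beta> * c i) + l * (sqdist_n m y c - \<theta> * m)
      = (\<Sum>i<m. - A' * (y i)\<^sup>2 + B i * y i + C i)" for y
  proof -
    have "- A * sqdist_n m y (\<lambda>i. \<beta> * c i) + l * (sqdist_n m y c - \<theta> * m)
        = (\<Sum>i<m. - A * (y i - \<beta> * c i)\<^sup>2 + l * (y i - c i)\<^sup>2 - l * \<theta>)"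
      unfolding sqdist_n_def
      by (simp add: sum.distrib sum_subtractf sum_distrib_left sum_negf algebra_simps)
    also have "\<dots> = (\<Sum>i<m. - A' * (y i)\<^sup>2 + B i * y i + C i)"
      by (intro sum.cong refl) (simp add: A'_def B_def C_def power2_eq_square algebra_simps)
    finally show ?thesis .
  qed
  have "(\<Sum>i<m. (B i)\<^sup>2 / (4 * A') + C i)
      = (\<Sum>i<m. (c i)\<^sup>2 * ((A * \<beta> - l)\<^sup>2 / A' + l - A * \<beta>\<^sup>2) - l * \<theta>)"
    using A' by (intro sum.cong refl) (simp add: B_def C_def power2_eq_square field_simps)
  also have "\<dots> = inner_n m c c * ((A * \<beta> - l)\<^sup>2 / A' + l - A * \<beta>\<^sup>2) - m * (l * \<theta>)"
    unfolding inner_n_def by (simp add: sum_subtractf sum_distrib_right power2_eq_square)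
  also have "(A * \<beta> - l)\<^sup>2 / A' + l - A * \<beta>\<^sup>2 = A * l * (1 - \<beta>)\<^sup>2 / A'"
    using A' by (simp add: A'_def field_simps power2_eq_square)
  finally have "(\<Sum>i<m. (B i)\<^sup>2 / (4 * A') + C i) = m * (A * l * (1 - \<beta>)\<^sup>2 / A' - l * \<theta>)"
    using c by (simp add: algebra_simps)
  then show ?thesis
    unfolding exponent nn_integral_exp_quadratic_n[OF A'] by (simp add: A'_def)
qed

section \<open>Counting codewords on the sphere\<close>

lemma ennreal_exp_le_window_add_tilts:
  fixes u d a b l1 l2 :: real
  assumes "0 \<le> l1" "l2 \<le> 0"
  shows "ennreal (exp u) \<le> ennreal (exp u) * indicator {a..b} d
    + ennreal (exp (u + l1 * (d - b))) + ennreal (exp (u + l2 * (d - a)))"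
proof (cases "d \<in> {a..b}")
  case True
  have "ennreal (exp u) * 1 + 0 + 0 \<le> ennreal (exp u) * indicator {a..b} d
      + ennreal (exp (u + l1 * (d - b))) + ennreal (exp (u + l2 * (d - a)))"
    using True by (intro add_mono) auto
  then show ?thesis by simp
next
  case False
  then consider "b < d" | "d < a" by fastforce
  then show ?thesis
  proof cases
    case 1
    then have "ennreal (exp u) \<le> ennreal (exp (u + l1 * (d - b)))"
      using assms by (intro ennreal_leI) simp
    moreover have "0 + ennreal (exp (u + l1 * (d - b))) + 0 \<le> ennreal (exp u) * indicator {a..b} d
        + ennreal (exp (u + l1 * (d - b))) + ennreal (exp (u + l2 * (d - a)))"
      by (intro add_mono) auto
    ultimately show ?thesis by (metis add.left_neutral add.right_neutral order_trans)
  next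
    case 2
    then have "ennreal (exp u) \<le> ennreal (exp (u + l2 * (d - a)))"
      using assms by (intro ennreal_leI) (simp add: mult_nonpos_nonpos)
    moreover have "0 + 0 + ennreal (exp (u + l2 * (d - a))) \<le> ennreal (exp u) * indicator {a..b} d
        + ennreal (exp (u + l1 * (d - b))) + ennreal (exp (u + l2 * (d - a)))"
      by (intro add_mono) auto
    ultimately show ?thesis by (metis add.left_neutral add.right_neutral order_trans)
  qed
qed

lemma ennreal_half_le_of_le_add_quarters:
  assumes "0 \<le> H" "ennreal H \<le> X + ennreal (H / 4) + ennreal (H / 4)"
  shows "ennreal (H / 2) \<le> X"
proof -
  have "ennreal (H / 2) + ennreal (H / 2) = ennreal H"
    using assms(1) by (simp add: ennreal_plus[symmetric])
  also have "\<dots> \<le> ennreal (H / 2) + X"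
    using assms by (simp add: ennreal_plus[symmetric] add.commute add.left_commute)
  finally show ?thesis by (simp add: ennreal_add_left_cancel_le)
qed

text \<open>Under the Gaussian weight centred at \<open>(1 - s) c\<close> the squared distance to \<open>c\<close> concentrates
  around \<open>s m\<close>; the hypotheses are Chernoff bounds for its two tails.\<close>

lemma gaussian_shell_mass_ge:
  fixes A s \<eta> l1 l2 :: real
  assumes l1: "0 < l1" "l1 < A" and l2: "l2 < 0"
    and upper: "sqrt (pi / (A - l1)) ^ m * exp (m * (A * l1 * s\<^sup>2 / (A - l1) - l1 * (s * (1 + \<eta>))))
      \<le> sqrt (pi / A) ^ m / 4"
    and lower: "sqrt (pi / (A - l2)) ^ m * exp (m * (A * l2 * s\<^sup>2 / (A - l2) - l2 * (s * (1 - \<eta>))))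
      \<le> sqrt (pi / A) ^ m / 4"
    and c: "inner_n m c c = m"
  shows "ennreal (sqrt (pi / A) ^ m / 2)
    \<le> (\<integral>\<^sup>+y. ennreal (exp (- A * sqdist_n m y (\<lambda>i. (1 - s) * c i)))
          * indicator {y. s * (1 - \<eta>) * m \<le> sqdist_n m y c \<and> sqdist_n m y c \<le> s * (1 + \<eta>) * m} y
        \<partial>lborel_n m)"
proof -
  define H where "H = sqrt (pi / A) ^ m"
  define h where "h y = exp (- A * sqdist_n m y (\<lambda>i. (1 - s) * c i))" for y
  define E where "E = {y. s * (1 - \<eta>) * m \<le> sqdist_n m y c \<and> sqdist_n m y c \<le> s * (1 + \<eta>) * m}"
  define t1 where "t1 y = exp (- A * sqdist_n m y (\<lambda>i. (1 - s) * c i) + l1 * (sqdist_n m y c - (s * (1 + \<eta>)) * m))" for y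
  define t2 where "t2 y = exp (- A * sqdist_n m y (\<lambda>i. (1 - s) * c i) + l2 * (sqdist_n m y c - (s * (1 - \<eta>)) * m))" for y
  have A: "A > 0" and "l2 < A" using l1 l2 by simp_all
  have [measurable]: "Measurable.pred (lborel_n m) (\<lambda>y. y \<in> E)"
    unfolding E_def by measurable
  have h_meas [measurable]: "(\<lambda>y. ennreal (h y)) \<in> borel_measurable (lborel_n m)"
    unfolding h_def by measurable
  have "(\<integral>\<^sup>+y. ennreal (h y) \<partial>lborel_n m) = ennreal H"
    using nn_integral_exp_sqdist_n[of 0 A m c "1 - s" 0] A c by (simp add: h_def H_def)
  have I1: "(\<integral>\<^sup>+y. ennreal (t1 y) \<partial>lborel_n m) \<le> ennreal (H / 4)"
    unfolding t1_def nn_integral_exp_sqdist_n[OF l1(2) c] using upper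
    by (intro ennreal_leI) (simp add: H_def)
  have I2: "(\<integral>\<^sup>+y. ennreal (t2 y) \<partial>lborel_n m) \<le> ennreal (H / 4)"
    unfolding t2_def nn_integral_exp_sqdist_n[OF \<open>l2 < A\<close> c] using lower
    by (intro ennreal_leI) (simp add: H_def)
  have tails: "ennreal (h y) \<le> ennreal (h y) * indicator E y + ennreal (t1 y) + ennreal (t2 y)" for y
    using ennreal_exp_le_window_add_tilts[of l1 l2 "- A * sqdist_n m y (\<lambda>i. (1 - s) * c i)"
        "s * (1 - \<eta>) * m" "s * (1 + \<eta>) * m" "sqdist_n m y c"] l1 l2
    by (simp add: h_def t1_def t2_def E_def indicator_def)
  have "ennreal H \<le> (\<integral>\<^sup>+y. ennreal (h y) * indicator E y + ennreal (t1 y) + ennreal (t2 y) \<partial>lborel_n m)"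
    unfolding \<open>(\<integral>\<^sup>+y. ennreal (h y) \<partial>lborel_n m) = ennreal H\<close>[symmetric]
    by (intro nn_integral_mono tails)
  also have "\<dots> = (\<integral>\<^sup>+y. ennreal (h y) * indicator E y \<partial>lborel_n m)
      + (\<integral>\<^sup>+y. ennreal (t1 y) \<partial>lborel_n m) + (\<integral>\<^sup>+y. ennreal (t2 y) \<partial>lborel_n m)"
    unfolding t1_def t2_def by (simp add: nn_integral_add)
  also have "\<dots> \<le> (\<integral>\<^sup>+y. ennreal (h y) * indicator E y \<partial>lborel_n m) + ennreal (H / 4) + ennreal (H / 4)"
    using I1 I2 by (intro add_mono) auto
  finally show ?thesis
    using A by (intro ennreal_half_le_of_le_add_quarters) (simp_all add: H_def h_def E_def)
qed

lemma exp_sqdist_n_shell_le: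
  fixes A s \<eta> :: real
  assumes s: "0 < s" "s < 1" and A: "A * s * (1 - s) = 1 / 2"
    and c: "inner_n m c c = m" and y: "s * (1 - \<eta>) * m \<le> sqdist_n m y c"
  shows "exp (- \<eta> * m / 2) * exp (- A * sqdist_n m y (\<lambda>i. (1 - s) * c i))
    \<le> exp (- (A * s) * sqdist_n m y (\<lambda>_. 0))"
proof -
  have "s * (A * (1 - s)) = 1 / 2" using A by (metis mult.assoc mult.commute)
  then have "0 < s * (A * (1 - s))" by simp
  then have "0 < A * (1 - s)" using s(1) by (rule zero_less_mult_pos)
  then have "A * (1 - s) * (s * (1 - \<eta>) * m - s * m) \<le> A * (1 - s) * (sqdist_n m y c - s * m)"
    using y by (intro mult_left_mono) auto
  moreover have "A * (1 - s) * (s * (1 - \<eta>) * m - s * m) = - (A * s * (1 - s)) * (\<eta> * m)"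
    by (simp add: algebra_simps)
  ultimately have "- \<eta> * m / 2 \<le> A * (1 - s) * (sqdist_n m y c - s * m)"
    using A by simp
  moreover have "A * sqdist_n m y (\<lambda>i. (1 - s) * c i) - A * s * sqdist_n m y (\<lambda>_. 0)
      = A * (1 - s) * (sqdist_n m y c - s * m)"
    unfolding sqdist_n_scaled[of m y "1 - s" c] c by (simp add: algebra_simps)
  ultimately show ?thesis
    by (simp add: exp_add[symmetric])
qed

lemma gaussian_ball_mass_ge:
  fixes A s \<eta> l1 l2 :: real
  assumes s: "0 < s" "s < 1" and A: "A * s * (1 - s) = 1 / 2"
    and l1: "0 < l1" "l1 < A" and l2: "l2 < 0"
    and upper: "sqrt (pi / (A - l1)) ^ m * exp (m * (A * l1 * s\<^sup>2 / (A - l1) - l1 * (s * (1 + \<eta>))))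
      \<le> sqrt (pi / A) ^ m / 4"
    and lower: "sqrt (pi / (A - l2)) ^ m * exp (m * (A * l2 * s\<^sup>2 / (A - l2) - l2 * (s * (1 - \<eta>))))
      \<le> sqrt (pi / A) ^ m / 4"
    and c: "inner_n m c c = m"
  shows "ennreal (exp (- \<eta> * m / 2) * sqrt (pi / A) ^ m / 2)
    \<le> (\<integral>\<^sup>+y. ennreal (exp (- (A * s) * sqdist_n m y (\<lambda>_. 0)))
          * indicator {y. sqdist_n m y c \<le> s * (1 + \<eta>) * m} y \<partial>lborel_n m)"
proof -
  define E where "E = {y. s * (1 - \<eta>) * m \<le> sqdist_n m y c \<and> sqdist_n m y c \<le> s * (1 + \<eta>) * m}"
  define h where "h y = exp (- A * sqdist_n m y (\<lambda>i. (1 - s) * c i))" for y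
  have "A > 0" using l1 by simp
  have "ennreal (exp (- \<eta> * m / 2) * sqrt (pi / A) ^ m / 2)
      = ennreal (exp (- \<eta> * m / 2)) * ennreal (sqrt (pi / A) ^ m / 2)"
    using \<open>A > 0\<close> by (simp add: ennreal_mult[symmetric])
  also have "\<dots> \<le> ennreal (exp (- \<eta> * m / 2)) * (\<integral>\<^sup>+y. ennreal (h y) * indicator E y \<partial>lborel_n m)"
    using gaussian_shell_mass_ge[OF l1 l2 upper lower c]
    by (intro mult_left_mono) (simp_all add: h_def E_def)
  also have "\<dots> = (\<integral>\<^sup>+y. ennreal (exp (- \<eta> * m / 2)) * (ennreal (h y) * indicator E y) \<partial>lborel_n m)"
    unfolding h_def E_def by (subst nn_integral_cmult) auto
  also have "\<dots> \<le> (\<integral>\<^sup>+y. ennreal (exp (- (A * s) * sqdist_n m y (\<lambda>_. 0)))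
      * indicator {y. sqdist_n m y c \<le> s * (1 + \<eta>) * m} y \<partial>lborel_n m)"
  proof (intro nn_integral_mono)
    fix y
    show "ennreal (exp (- \<eta> * m / 2)) * (ennreal (h y) * indicator E y)
      \<le> ennreal (exp (- (A * s) * sqdist_n m y (\<lambda>_. 0))) * indicator {y. sqdist_n m y c \<le> s * (1 + \<eta>) * m} y"
    proof (cases "y \<in> E")
      case True
      then have "exp (- \<eta> * m / 2) * h y \<le> exp (- (A * s) * sqdist_n m y (\<lambda>_. 0))"
        unfolding h_def using exp_sqdist_n_shell_le[OF s A c] by (simp add: E_def)
      moreover have "ennreal (exp (- \<eta> * m / 2)) * ennreal (h y) = ennreal (exp (- \<eta> * m / 2) * h y)"
        by (simp add: h_def ennreal_mult)
      ultimately show ?thesis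
        using True by (simp add: E_def ennreal_leI)
    qed simp
  qed
  finally show ?thesis .
qed

text \<open>Each ball around a codeword carries a fixed fraction of the weight \<open>exp (- A s |y|\<^sup>2)\<close>,
  while no point lies in more than \<open>R\<close> of the balls.\<close>

lemma card_le_gaussian_averaging:
  fixes A s \<eta> l1 l2 :: real and R m :: nat
  assumes s: "0 < s" "s < 1" and A: "A * s * (1 - s) = 1 / 2"
    and l1: "0 < l1" "l1 < A" and l2: "l2 < 0"
    and upper: "sqrt (pi / (A - l1)) ^ m * exp (m * (A * l1 * s\<^sup>2 / (A - l1) - l1 * (s * (1 + \<eta>))))
      \<le> sqrt (pi / A) ^ m / 4"
    and lower: "sqrt (pi / (A - l2)) ^ m * exp (m * (A * l2 * s\<^sup>2 / (A - l2) - l2 * (s * (1 - \<eta>))))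
      \<le> sqrt (pi / A) ^ m / 4"
    and fin: "finite S" and sphere: "\<And>c. c \<in> S \<Longrightarrow> inner_n m c c = m"
    and local: "\<And>y. card {c\<in>S. sqdist_n m y c \<le> s * (1 + \<eta>) * m} \<le> R"
  shows "card S * (exp (- \<eta> * m / 2) * sqrt (pi / A) ^ m / 2) \<le> R * sqrt (pi / (A * s)) ^ m"
proof -
  define w where "w = exp (- \<eta> * m / 2) * sqrt (pi / A) ^ m / 2"
  define g where "g y = exp (- (A * s) * sqdist_n m y (\<lambda>_. 0))" for y
  define B where "B c = {y. sqdist_n m y c \<le> s * (1 + \<eta>) * m}" for c
  have "A > 0" using l1 by simp
  then have "A * s > 0" "w \<ge> 0" using s by (simp_all add: w_def)
  have "ennreal (card S * w) = (\<Sum>c\<in>S. ennreal w)"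
    using \<open>w \<ge> 0\<close> by (simp add: ennreal_mult ennreal_of_nat_eq_real_of_nat)
  also have "\<dots> \<le> (\<Sum>c\<in>S. \<integral>\<^sup>+y. ennreal (g y) * indicator (B c) y \<partial>lborel_n m)"
    using gaussian_ball_mass_ge[OF s A l1 l2 upper lower sphere]
    by (intro sum_mono) (simp add: w_def g_def B_def)
  also have "\<dots> = (\<integral>\<^sup>+y. ennreal (g y) * of_nat (card {c\<in>S. sqdist_n m y c \<le> s * (1 + \<eta>) * m}) \<partial>lborel_n m)"
    using fin unfolding g_def
    by (subst nn_integral_sum[symmetric])
      (auto simp: sum_distrib_left[symmetric] sum.inter_filter[symmetric] B_def indicator_def
        Collect_conj_eq intro!: nn_integral_cong)
  also have "\<dots> \<le> (\<integral>\<^sup>+y. ennreal (g y) * of_nat R \<partial>lborel_n m)"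
    using local by (intro nn_integral_mono mult_left_mono) auto
  also have "\<dots> = (\<integral>\<^sup>+y. ennreal (g y) \<partial>lborel_n m) * of_nat R"
    unfolding g_def by (rule nn_integral_multc) measurable
  also have "\<dots> = ennreal (R * sqrt (pi / (A * s)) ^ m)"
    unfolding g_def nn_integral_exp_sqnorm_n[OF \<open>A * s > 0\<close>] using \<open>A * s > 0\<close>
    by (simp add: ennreal_mult ennreal_of_nat_eq_real_of_nat mult.commute)
  finally show ?thesis
    using \<open>A * s > 0\<close> by (simp add: w_def)
qed

text \<open>The closed form of \<open>nn_integral_exp_sqdist_n\<close> for \<open>\<beta> = 1 - s\<close>, simplified using
  \<open>ln x \<le> x - 1\<close>.\<close>

lemma tilted_gaussian_mass_le:
  fixes A l s \<theta> :: real
  assumes A: "A > 0" and l: "l < A" and As: "A * s * (1 - s) = 1/2"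
  shows "sqrt (pi / (A - l)) ^ m * exp (m * (A * l * s\<^sup>2 / (A - l) - l * \<theta>))
       \<le> sqrt (pi / A) ^ m * exp (m * (l * (A * s / (A - l) - \<theta>)))"
proof -
  have Al: "A - l > 0" using l by simp
  define x where "x = A / (A - l)"
  have x0: "x > 0" using A Al by (simp add: x_def)
  have "pi / (A - l) = pi / A * x" using A Al by (simp add: x_def field_simps)
  then have sq: "sqrt (pi / (A - l)) = sqrt (pi / A) * sqrt x" by (simp only: real_sqrt_mult)
  have "sqrt x = exp (ln x / 2)"
    using x0 by (simp add: powr_half_sqrt[symmetric] powr_def)
  also have "\<dots> \<le> exp ((x - 1) / 2)" using ln_le_minus_one[OF x0] by simp
  also have "x - 1 = l / (A - l)" using Al by (simp add: x_def field_simps)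
  finally have sx: "sqrt x \<le> exp (l / (A - l) / 2)" .
  have "sqrt x ^ m \<le> exp (l / (A - l) / 2) ^ m" using sx x0 by (intro power_mono) auto
  also have "\<dots> = exp (m * (l / (A - l) / 2))" by (rule exp_of_nat_mult[symmetric])
  finally have sxm: "sqrt x ^ m \<le> exp (m * (l / (A - l) / 2))" .
  have "sqrt (pi / (A - l)) ^ m * exp (m * (A * l * s\<^sup>2 / (A - l) - l * \<theta>))
      = sqrt (pi / A) ^ m * (sqrt x ^ m * exp (m * (A * l * s\<^sup>2 / (A - l) - l * \<theta>)))"
    unfolding sq by (simp add: power_mult_distrib mult_ac)
  also have "\<dots> \<le> sqrt (pi / A) ^ m * (exp (m * (l / (A - l) / 2)) * exp (m * (A * l * s\<^sup>2 / (A - l) - l * \<theta>)))"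
    using sxm A by (intro mult_left_mono mult_right_mono) auto
  also have "exp (m * (l / (A - l) / 2)) * exp (m * (A * l * s\<^sup>2 / (A - l) - l * \<theta>))
      = exp (m * (l * ((1/2 + A * s\<^sup>2) / (A - l)) - l * \<theta>))"
  proof -
    have "m * (l / (A - l) / 2) + m * (A * l * s\<^sup>2 / (A - l) - l * \<theta>) = m * (l * ((1/2 + A * s\<^sup>2) / (A - l)) - l * \<theta>)"
      by (simp add: add_divide_distrib algebra_simps)
    then show ?thesis by (simp only: exp_add[symmetric])
  qed
  also have "1/2 + A * s\<^sup>2 = A * s" using As by (simp add: power2_eq_square algebra_simps)
  also have "exp (m * (l * (A * s / (A - l)) - l * \<theta>)) = exp (m * (l * (A * s / (A - l) - \<theta>)))"
    by (simp add: algebra_simps)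
  finally show ?thesis .
qed

lemma eventually_exp_le:
  fixes x \<delta> :: real
  assumes "x < 0" "\<delta> > 0"
  shows "\<forall>\<^sub>F m in sequentially. exp (m * x) \<le> \<delta>"
proof (rule eventually_sequentiallyI)
  fix m :: nat
  assume "nat \<lceil>ln \<delta> / x\<rceil> \<le> m"
  then have "ln \<delta> / x \<le> m" by linarith
  then have "m * x \<le> ln \<delta>" using assms by (simp add: divide_le_eq mult.commute)
  then show "exp (m * x) \<le> \<delta>" using assms by (simp add: ln_ge_iff)
qed

lemma eventually_tilted_gaussian_mass_le:
  fixes A l s \<theta> :: real
  assumes A: "A > 0" and l: "l < A" and As: "A * s * (1 - s) = 1 / 2"
    and exponent: "l * (A * s / (A - l) - \<theta>) < 0"
  shows "\<forall>\<^sub>F m in sequentially.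
    sqrt (pi / (A - l)) ^ m * exp (m * (A * l * s\<^sup>2 / (A - l) - l * \<theta>)) \<le> sqrt (pi / A) ^ m / 4"
  using eventually_exp_le[OF exponent, of "1 / 4", simplified]
proof eventually_elim
  case (elim m)
  have "sqrt (pi / (A - l)) ^ m * exp (m * (A * l * s\<^sup>2 / (A - l) - l * \<theta>))
      \<le> sqrt (pi / A) ^ m * exp (m * (l * (A * s / (A - l) - \<theta>)))"
    by (rule tilted_gaussian_mass_le[OF A l As])
  also have "\<dots> \<le> sqrt (pi / A) ^ m * (1 / 4)"
    using elim A by (intro mult_left_mono) auto
  finally show ?case by simp
qed

lemma upper_tilt_exponent_neg:
  fixes A s \<eta> l :: real
  assumes A: "A > 0" and s: "s > 0" and \<eta>: "\<eta> > 0" and l: "l = A * \<eta> / (2 * (1 + \<eta>))"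
  shows "0 < l" "l < A" "l * (A * s / (A - l) - s * (1 + \<eta>)) < 0"
proof -
  show l_pos: "0 < l" "l < A" using A \<eta> by (simp_all add: l field_simps add_pos_pos)
  have "(1 + \<eta>) * (A - l) = A + A * \<eta> / 2"
    using \<eta> by (simp add: l field_simps)
  then have "A < (1 + \<eta>) * (A - l)"
    using A \<eta> by simp
  then have "A * s < ((1 + \<eta>) * (A - l)) * s"
    using s by (rule mult_strict_right_mono)
  then have "A * s / (A - l) < s * (1 + \<eta>)"
    using l_pos by (simp add: field_simps)
  then show "l * (A * s / (A - l) - s * (1 + \<eta>)) < 0"
    using l_pos by (simp add: mult_pos_neg)
qed

lemma lower_tilt_exponent_neg:
  fixes A s \<eta> l :: real
  assumes A: "A > 0" and s: "s > 0" and \<eta>: "\<eta> > 0" and l: "l = - (A * \<eta> / 2)"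
  shows "l < 0" "l < A" "l * (A * s / (A - l) - s * (1 - \<eta>)) < 0"
proof -
  show "l < 0" using A \<eta> by (simp add: l)
  with A show "l < A" by linarith
  note l_neg = \<open>l < 0\<close> \<open>l < A\<close>
  have "(1 - \<eta>) * (A - l) = A - A * \<eta> * (1 + \<eta>) / 2"
    by (simp add: l field_simps)
  then have "(1 - \<eta>) * (A - l) < A"
    using A \<eta> by simp
  then have "((1 - \<eta>) * (A - l)) * s < A * s"
    using s by (rule mult_strict_right_mono)
  then have "s * (1 - \<eta>) < A * s / (A - l)"
    using l_neg by (simp add: field_simps)
  then show "l * (A * s / (A - l) - s * (1 - \<eta>)) < 0"
    using l_neg by (simp add: mult_neg_pos)
qed

lemma chernoff_shell_tails:
  fixes A s \<eta> :: real
  assumes s: "0 < s" "s < 1" and As: "A * s * (1 - s) = 1 / 2" and \<eta>: "\<eta> > 0"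
  obtains l1 l2 where "0 < l1" "l1 < A" "l2 < 0"
    "\<forall>\<^sub>F m in sequentially.
      sqrt (pi / (A - l1)) ^ m * exp (m * (A * l1 * s\<^sup>2 / (A - l1) - l1 * (s * (1 + \<eta>))))
        \<le> sqrt (pi / A) ^ m / 4 \<and>
      sqrt (pi / (A - l2)) ^ m * exp (m * (A * l2 * s\<^sup>2 / (A - l2) - l2 * (s * (1 - \<eta>))))
        \<le> sqrt (pi / A) ^ m / 4"
proof -
  have "s * (1 - s) * A = 1 / 2" using As by (metis mult.commute mult.left_commute)
  then have "0 < s * (1 - s) * A" by simp
  moreover have "0 < s * (1 - s)" using s by simp
  ultimately have A: "A > 0" by (rule zero_less_mult_pos)
  note upper = upper_tilt_exponent_neg[OF A s(1) \<eta> refl]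
  note lower = lower_tilt_exponent_neg[OF A s(1) \<eta> refl]
  show thesis
    using that[OF upper(1,2) lower(1)] eventually_conj
      eventually_tilted_gaussian_mass_le[OF A upper(2) As upper(3)]
      eventually_tilted_gaussian_mass_le[OF A lower(2) As lower(3)]
    by blast
qed

lemma eventually_card_sphere_code_le:
  fixes s \<eta> x :: real and R :: nat
  assumes s: "0 < s" "s < 1" and \<eta>: "0 < \<eta>" and x: "(\<eta> + ln (1 / s)) / 2 \<le> x"
  shows "\<forall>\<^sub>F m in sequentially. \<forall>S. finite S \<longrightarrow> (\<forall>c\<in>S. inner_n m c c = m) \<longrightarrow>
    (\<forall>y. card {c\<in>S. sqdist_n m y c \<le> s * (1 + \<eta>) * m} \<le> R) \<longrightarrow>
    card S \<le> 2 * R * exp (m * x)"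
proof -
  define A where "A = 1 / (2 * s * (1 - s))"
  have As: "A * s * (1 - s) = 1 / 2" and A: "A > 0" using s by (simp_all add: A_def)
  obtain l1 l2 where l: "0 < l1" "l1 < A" "l2 < 0" and tails: "\<forall>\<^sub>F m in sequentially.
      sqrt (pi / (A - l1)) ^ m * exp (m * (A * l1 * s\<^sup>2 / (A - l1) - l1 * (s * (1 + \<eta>))))
        \<le> sqrt (pi / A) ^ m / 4 \<and>
      sqrt (pi / (A - l2)) ^ m * exp (m * (A * l2 * s\<^sup>2 / (A - l2) - l2 * (s * (1 - \<eta>))))
        \<le> sqrt (pi / A) ^ m / 4"
    using chernoff_shell_tails[OF s As \<eta>] by blast
  from tails show ?thesis
  proof eventually_elim
    case (elim m)
    define H where "H = sqrt (pi / A) ^ m"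
    have H: "H > 0" using A by (simp add: H_def)
    have "sqrt (pi / (A * s)) = sqrt (pi / A) * sqrt (1 / s)"
      by (simp add: real_sqrt_mult[symmetric])
    then have "sqrt (pi / (A * s)) ^ m = H * sqrt (1 / s) ^ m"
      by (simp add: H_def power_mult_distrib)
    also have "sqrt (1 / s) ^ m = exp (m * ln (1 / s) / 2)"
      using s by (simp add: exp_of_nat_mult[symmetric] powr_half_sqrt[symmetric] powr_def)
    finally have ball_weight: "sqrt (pi / (A * s)) ^ m = H * exp (m * ln (1 / s) / 2)" .
    show ?case
    proof (intro allI impI)
      fix S :: "(nat \<Rightarrow> real) set"
      assume "finite S" "\<forall>c\<in>S. inner_n m c c = m"
        "\<forall>y. card {c\<in>S. sqdist_n m y c \<le> s * (1 + \<eta>) * m} \<le> R"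
      then have "card S * (exp (- \<eta> * m / 2) * sqrt (pi / A) ^ m / 2) \<le> R * sqrt (pi / (A * s)) ^ m"
        using elim by (intro card_le_gaussian_averaging[OF s As l]) auto
      then have "card S * (exp (- \<eta> * m / 2) * H / 2) \<le> R * (H * exp (m * ln (1 / s) / 2))"
        unfolding ball_weight H_def .
      then have "card S * exp (- \<eta> * m / 2) \<le> 2 * R * exp (m * ln (1 / s) / 2)"
        using H by (simp add: field_simps)
      then have "card S \<le> 2 * R * exp (m * ((\<eta> + ln (1 / s)) / 2))"
        by (simp add: exp_minus exp_add[symmetric] field_simps)
      also have "\<dots> \<le> 2 * R * exp (m * x)"
        using mult_left_mono[OF x, of "real m"] by (intro mult_left_mono) auto
      finally show "card S \<le> 2 * R * exp (m * x)" .
    qed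
  qed
qed

lemma eventually_card_sphere_list_decodable_le_exp:
  fixes s \<eta> \<theta> x :: real and L :: nat
  assumes L: "L \<ge> 1" and s: "0 < s" "s * (1 + \<eta>) < 1" and \<eta>: "0 < \<eta>"
    and \<theta>: "(real L - 1) / L * (s * (1 + \<eta>) * (1 + \<eta> / 2)) < \<theta>"
    and x: "(\<eta> + ln (1 / s)) / 2 \<le> x"
  obtains M where "\<forall>\<^sub>F m in sequentially. \<forall>S. finite S \<longrightarrow> (\<forall>c\<in>S. inner_n m c c = m) \<longrightarrow>
      (\<forall>z. card {c\<in>S. sqdist_n m c z \<le> \<theta> * m} \<le> L - 1) \<longrightarrow>
      card S \<le> M * exp (m * x)"
proof -
  define r where "r = s * (1 + \<eta>)"
  have r: "0 \<le> r" "r < 1" using s \<eta> by (simp_all add: r_def)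
  have "s < 1" using s \<eta> by (smt (verit) mult_less_cancel_left1)
  have "r * \<eta> / 2 > 0" using s \<eta> by (simp add: r_def)
  moreover have "(real L - 1) / L * (r + r * \<eta> / 2) < \<theta>"
    using \<theta> by (simp add: r_def algebra_simps)
  ultimately obtain R where R: "\<And>m S y. m > 0 \<Longrightarrow> finite S \<Longrightarrow> (\<And>c. c \<in> S \<Longrightarrow> inner_n m c c = m) \<Longrightarrow>
       (\<And>z. card {c\<in>S. sqdist_n m c z \<le> \<theta> * m} \<le> L - 1) \<Longrightarrow>
       card {c\<in>S. sqdist_n m y c \<le> r * m} < R"
    using card_cap_bounded[OF L r] by blast
  show thesis
  proof (rule that[of "2 * real R"])
    show "\<forall>\<^sub>F m in sequentially. \<forall>S. finite S \<longrightarrow> (\<forall>c\<in>S. inner_n m c c = m) \<longrightarrow>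
      (\<forall>z. card {c\<in>S. sqdist_n m c z \<le> \<theta> * m} \<le> L - 1) \<longrightarrow>
      card S \<le> 2 * real R * exp (m * x)"
      using eventually_card_sphere_code_le[OF s(1) \<open>s < 1\<close> \<eta> x, of R] eventually_gt_at_top[of 0]
    proof eventually_elim
      case (elim m)
      show ?case
        using elim R[of m] by (simp add: r_def less_imp_le)
    qed
  qed
qed

text \<open>The counting is done in caps of squared radius \<open>s (1 + \<eta>) m\<close>, where
  \<open>s = t / (1 + \<eta>)\<^sup>2\<close> lies just below the critical value \<open>t = L \<theta> / (L - 1)\<close>.\<close>

lemma eventually_card_sphere_list_decodable_le:
  fixes \<theta> e :: real and L :: nat
  assumes L: "L \<ge> 2" and \<theta>: "0 < \<theta>" "\<theta> \<le> (real L - 1) / L" and e: "e > 0"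
  obtains M where "\<forall>\<^sub>F m in sequentially. \<forall>S. finite S \<longrightarrow> (\<forall>c\<in>S. inner_n m c c = m) \<longrightarrow>
      (\<forall>z. card {c\<in>S. sqdist_n m c z \<le> \<theta> * m} \<le> L - 1) \<longrightarrow>
      card S \<le> M * exp (m * (ln ((real L - 1) / (L * \<theta>)) / 2 + e))"
proof -
  define t where "t = L * \<theta> / (real L - 1)"
  define \<eta> where "\<eta> = e / 2"
  define s where "s = t / (1 + \<eta>)\<^sup>2"
  have "real L - 1 > 0" using L by simp
  then have t: "0 < t" "t \<le> 1" and \<theta>_t: "(real L - 1) / L * t = \<theta>"
    using \<theta> L by (simp_all add: t_def field_simps)
  have \<eta>: "\<eta> > 0" using e by (simp add: \<eta>_def)
  have s_\<eta>: "s * (1 + \<eta>) = t / (1 + \<eta>)"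
    using \<eta> by (simp add: s_def power2_eq_square)
  have "0 < s" using t \<eta> by (simp add: s_def)
  moreover have "s * (1 + \<eta>) < 1"
    unfolding s_\<eta> using t \<eta> by (simp add: divide_less_eq)
  ultimately have s: "0 < s" "s * (1 + \<eta>) < 1" by blast+
  have "(real L - 1) / L * (s * (1 + \<eta>) * (1 + \<eta> / 2)) = (real L - 1) / L * t * ((1 + \<eta> / 2) / (1 + \<eta>))"
    unfolding s_\<eta> by simp
  also have "\<dots> = \<theta> * ((1 + \<eta> / 2) / (1 + \<eta>))"
    unfolding \<theta>_t ..
  also have "\<dots> < \<theta>"
    using \<theta> \<eta> mult_strict_left_mono[of "(1 + \<eta> / 2) / (1 + \<eta>)" 1 \<theta>] by (simp add: divide_less_eq)
  finally have "(real L - 1) / L * (s * (1 + \<eta>) * (1 + \<eta> / 2)) < \<theta>" .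
  moreover have "L \<ge> 1" using L by simp
  moreover have "ln (1 / s) = 2 * ln (1 + \<eta>) + ln (1 / t)"
    using t \<eta> by (simp add: s_def ln_div ln_mult power2_eq_square)
  then have "(\<eta> + ln (1 / s)) / 2 \<le> ln ((real L - 1) / (L * \<theta>)) / 2 + e"
    using ln_add_one_self_le_self[of \<eta>] \<eta> by (simp add: t_def \<eta>_def)
  ultimately show thesis
    using eventually_card_sphere_list_decodable_le_exp[OF _ s \<eta>] that by blast
qed

section \<open>From the ball to the sphere\<close>

text \<open>Scaling a point of the ball of radius \<open>sqrt (n P)\<close> by \<open>sqrt ((n + 1) / (n P))\<close> and appending
  one coordinate puts it on the sphere of radius \<open>sqrt (n + 1)\<close>; the extra coordinate can only
  increase distances, so list-decodability survives with \<open>\<theta> = N / P\<close>.\<close>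

definition lift_scale :: "nat \<Rightarrow> real \<Rightarrow> real" where
  "lift_scale n P = sqrt (Suc n / (n * P))"

definition sphere_lift :: "nat \<Rightarrow> real \<Rightarrow> (nat \<Rightarrow> real) \<Rightarrow> nat \<Rightarrow> real" where
  "sphere_lift n P c i = lift_scale n P *
     (if i < n then c i else if i = n then sqrt (n * P - (\<Sum>j<n. (c j)\<^sup>2)) else 0)"

lemma lift_scale_pos: "n > 0 \<Longrightarrow> P > 0 \<Longrightarrow> lift_scale n P > 0"
  by (simp add: lift_scale_def)

lemma lift_scale_square: "n > 0 \<Longrightarrow> P > 0 \<Longrightarrow> (lift_scale n P)\<^sup>2 * (n * P) = Suc n"
  by (simp add: lift_scale_def)

lemma inner_n_sphere_lift:
  fixes P :: real
  assumes "n > 0" "P > 0" and c: "(\<Sum>j<n. (c j)\<^sup>2) \<le> n * P"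
  shows "inner_n (Suc n) (sphere_lift n P c) (sphere_lift n P c) = Suc n"
proof -
  have "inner_n (Suc n) (sphere_lift n P c) (sphere_lift n P c)
      = (lift_scale n P)\<^sup>2 * ((\<Sum>j<n. (c j)\<^sup>2) + (n * P - (\<Sum>j<n. (c j)\<^sup>2)))"
    using c by (simp add: inner_n_def sphere_lift_def power2_eq_square sum_distrib_left algebra_simps)
  also have "\<dots> = Suc n" using lift_scale_square[OF assms(1,2)] by simp
  finally show ?thesis .
qed

lemma inj_on_sphere_lift:
  fixes P :: real
  assumes "n > 0" "P > 0"
  shows "inj_on (sphere_lift n P) (Rn n)"
proof (rule inj_onI)
  fix c d assume cd: "c \<in> Rn n" "d \<in> Rn n" and eq: "sphere_lift n P c = sphere_lift n P d"
  show "c = d"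
  proof
    fix i
    show "c i = d i"
    proof (cases "i < n")
      case True
      then show ?thesis
        using fun_cong[OF eq, of i] lift_scale_pos[OF assms] by (simp add: sphere_lift_def)
    qed (use cd in \<open>simp add: Rn_def\<close>)
  qed
qed

lemma sphere_lift_near:
  fixes P N :: real
  assumes "n > 0" "P > 0" and c: "c \<in> Rn n"
    and near: "sqdist_n (Suc n) (sphere_lift n P c) z \<le> N / P * Suc n"
  shows "c \<in> ballN n (\<lambda>i. if i < n then z i / lift_scale n P else 0) (sqrt (n * N))"
proof -
  define \<kappa> where "\<kappa> = lift_scale n P"
  define z' where "z' i = (if i < n then z i / \<kappa> else 0)" for i
  have \<kappa>: "\<kappa> > 0" "\<kappa>\<^sup>2 * (n * P) = Suc n"
    using lift_scale_pos[OF assms(1,2)] lift_scale_square[OF assms(1,2)] by (simp_all add: \<kappa>_def)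
  have "\<kappa>\<^sup>2 * (\<Sum>i<n. (c i - z' i)\<^sup>2) = (\<Sum>i<n. (sphere_lift n P c i - z i)\<^sup>2)"
    unfolding sum_distrib_left
  proof (intro sum.cong refl)
    fix i assume "i \<in> {..<n}"
    then have "sphere_lift n P c i - z i = \<kappa> * (c i - z' i)"
      using \<kappa> by (simp add: sphere_lift_def z'_def \<kappa>_def field_simps)
    then show "\<kappa>\<^sup>2 * (c i - z' i)\<^sup>2 = (sphere_lift n P c i - z i)\<^sup>2"
      by (simp add: power_mult_distrib)
  qed
  also have "\<dots> \<le> sqdist_n (Suc n) (sphere_lift n P c) z"
    by (simp add: sqdist_n_def)
  also have "\<dots> \<le> N / P * (\<kappa>\<^sup>2 * (n * P))"
    using near \<kappa> by simp
  also have "\<dots> = \<kappa>\<^sup>2 * (n * N)"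
    using assms(2) by (simp add: field_simps)
  finally have "(\<Sum>i<n. (c i - z' i)\<^sup>2) \<le> n * N"
    using \<kappa> by simp
  then show ?thesis
    using c by (simp add: ballN_def distn_def z'_def \<kappa>_def)
qed

lemma list_decodable_sphere_lift:
  fixes P N :: real
  assumes "n > 0" "P > 0" and ld: "list_decodable n P N K C"
  obtains S where "finite S" "card S = card C" "\<forall>c\<in>S. inner_n (Suc n) c c = Suc n"
    "\<forall>z. card {c\<in>S. sqdist_n (Suc n) c z \<le> N / P * Suc n} \<le> K"
proof
  define f where "f = sphere_lift n P"
  have fin: "finite C" and C: "C \<subseteq> ballN n (\<lambda>_. 0) (sqrt (n * P))"
    and list: "\<forall>y\<in>Rn n. card (C \<inter> ballN n y (sqrt (n * N))) \<le> K"
    using ld by (auto simp: list_decodable_def)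
  have Rn: "C \<subseteq> Rn n" using C by (auto simp: ballN_def)
  show "finite (f ` C)" using fin by simp
  show "card (f ` C) = card C"
    using inj_on_sphere_lift[OF assms(1,2)] Rn by (simp add: f_def card_image inj_on_subset)
  have "(\<Sum>j<n. (c j)\<^sup>2) \<le> n * P" if "c \<in> C" for c
    using C that by (auto simp: ballN_def distn_def)
  then show "\<forall>c\<in>f ` C. inner_n (Suc n) c c = Suc n"
    using inner_n_sphere_lift[OF assms(1,2)] by (auto simp: f_def)
  show "\<forall>z. card {c\<in>f ` C. sqdist_n (Suc n) c z \<le> N / P * Suc n} \<le> K"
  proof
    fix z
    define y where "y = (\<lambda>i. if i < n then z i / lift_scale n P else 0)"
    have "{c\<in>f ` C. sqdist_n (Suc n) c z \<le> N / P * Suc n} \<subseteq> f ` (C \<inter> ballN n y (sqrt (n * N)))"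
    proof
      fix x assume "x \<in> {c\<in>f ` C. sqdist_n (Suc n) c z \<le> N / P * Suc n}"
      then obtain c where "c \<in> C" "x = f c" "sqdist_n (Suc n) (f c) z \<le> N / P * Suc n"
        by auto
      then show "x \<in> f ` (C \<inter> ballN n y (sqrt (n * N)))"
        using sphere_lift_near[OF assms(1,2), of c z N] Rn by (auto simp: f_def y_def[symmetric])
    qed
    then have "card {c\<in>f ` C. sqdist_n (Suc n) c z \<le> N / P * Suc n} \<le> card (C \<inter> ballN n y (sqrt (n * N)))"
      using fin by (meson card_image_le card_mono finite_Int finite_imageI order_trans)
    also have "\<dots> \<le> K" using list by (simp add: y_def Rn_def)
    finally show "card {c\<in>f ` C. sqdist_n (Suc n) c z \<le> N / P * Suc n} \<le> K" .
  qed
qed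

lemma eventually_card_list_decodable_le:
  fixes P N M x :: real
  assumes P: "P > 0"
    and sphere_bound: "\<forall>\<^sub>F m in sequentially. \<forall>S. finite S \<longrightarrow> (\<forall>c\<in>S. inner_n m c c = m) \<longrightarrow>
      (\<forall>z. card {c\<in>S. sqdist_n m c z \<le> N / P * m} \<le> K) \<longrightarrow> card S \<le> M * exp (m * x)"
  shows "\<forall>\<^sub>F n in sequentially. \<forall>C. list_decodable n P N K C \<longrightarrow> card C \<le> M * exp x * exp (n * x)"
  using eventually_sequentially_Suc[THEN iffD2, OF sphere_bound] eventually_gt_at_top[of 0]
proof eventually_elim
  case (elim n)
  show ?case
  proof (intro allI impI)
    fix C assume "list_decodable n P N K C"
    then obtain S where S: "finite S" "card S = card C" "\<forall>c\<in>S. inner_n (Suc n) c c = Suc n"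
      "\<forall>z. card {c\<in>S. sqdist_n (Suc n) c z \<le> N / P * Suc n} \<le> K"
      by (rule list_decodable_sphere_lift[OF elim(2) P])
    from elim(1) S(1,3,4) have "card S \<le> M * exp (Suc n * x)" by blast
    then have "card C \<le> M * exp (Suc n * x)" using S(2) by simp
    also have "\<dots> = M * exp x * exp (n * x)" by (simp add: exp_add[symmetric] algebra_simps)
    finally show "card C \<le> M * exp x * exp (n * x)" .
  qed
qed

lemma rate_le_of_card_le:
  fixes M x :: real
  assumes n: "n > 0" and C: "card C > 0" and card_le: "card C \<le> M * exp (n * x)"
  shows "rate n C \<le> x + ln M / n"
proof -
  have "M > 0"
  proof (rule ccontr)
    assume "\<not> M > 0"
    then have "M * exp (n * x) \<le> 0" by (simp add: mult_nonpos_nonneg)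
    then show False using C card_le by simp
  qed
  have "ln (card C) \<le> ln (M * exp (n * x))"
    using C card_le by simp
  also have "\<dots> = ln M + n * x" using \<open>M > 0\<close> by (simp add: ln_mult)
  finally show ?thesis using n by (simp add: rate_def field_simps)
qed

text \<open>The hypothesis \<open>B \<ge> 0\<close> cannot be dropped: the empty code is list-decodable, with rate
  \<open>ln 0 / n = 0\<close>.\<close>

lemma capacity_le_of_eventual_card_le:
  fixes B :: real
  assumes B: "B \<ge> 0"
    and card_le: "\<And>e. e > 0 \<Longrightarrow> \<exists>M. \<forall>\<^sub>F n in sequentially.
      \<forall>C. list_decodable n P N K C \<longrightarrow> card C \<le> M * exp (n * (B + e))"
  shows "capacity K P N \<le> ereal B"
proof (rule ereal_le_epsilon2)
  fix e :: real assume e: "0 < e"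
  obtain M where M: "\<forall>\<^sub>F n in sequentially.
      \<forall>C. list_decodable n P N K C \<longrightarrow> card C \<le> M * exp (n * (B + e / 2))"
    using card_le[of "e / 2"] e by auto
  have "\<forall>\<^sub>F n in sequentially. ln M / n < e / 2"
    using e by (intro order_tendstoD(2)[OF lim_const_over_n]) simp
  then have "\<forall>\<^sub>F n in sequentially. (SUP C\<in>{C. list_decodable n P N K C}. ereal (rate n C)) \<le> ereal (B + e)"
    using M eventually_gt_at_top[of 0]
  proof eventually_elim
    case (elim n)
    show ?case
    proof (rule SUP_least)
      fix C assume "C \<in> {C. list_decodable n P N K C}"
      show "ereal (rate n C) \<le> ereal (B + e)"
      proof (cases "card C = 0")
        case True
        then show ?thesis using B e by (simp add: rate_def)
      next
        case False
        then have "rate n C \<le> B + e / 2 + ln M / n"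
          using rate_le_of_card_le[of n C M "B + e / 2"] elim(2,3) \<open>C \<in> _\<close> by auto
        then have "rate n C \<le> B + e" using elim(1) by linarith
        then show ?thesis by simp
      qed
    qed
  qed
  then have "capacity K P N \<le> ereal (B + e)"
    unfolding capacity_def by (rule Limsup_bounded)
  then show "capacity K P N \<le> ereal B + ereal e" by simp
qed

theorem mainTheorem16:
  fixes L :: nat and P N :: real
  assumes "L \<ge> 2" and "N > 0" and "P > 0"
    and "N / P \<le> (real L - 1) / real L"
  shows "capacity (L - 1) P N \<le> ereal (1/2 * ln ((real L - 1) * P / (real L * N)))"
proof -
  define B where "B = ln ((real L - 1) / (L * (N / P))) / 2"
  have "1 \<le> (real L - 1) / (L * (N / P))"
    using assms by (simp add: field_simps)
  then have "B \<ge> 0" by (simp add: B_def)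
  have "capacity (L - 1) P N \<le> ereal B"
  proof (rule capacity_le_of_eventual_card_le[OF \<open>B \<ge> 0\<close>])
    fix e :: real assume "e > 0"
    obtain M where "\<forall>\<^sub>F m in sequentially. \<forall>S. finite S \<longrightarrow> (\<forall>c\<in>S. inner_n m c c = m) \<longrightarrow>
        (\<forall>z. card {c\<in>S. sqdist_n m c z \<le> N / P * m} \<le> L - 1) \<longrightarrow> card S \<le> M * exp (m * (B + e))"
      using eventually_card_sphere_list_decodable_le[OF \<open>L \<ge> 2\<close> _ \<open>N / P \<le> _\<close> \<open>e > 0\<close>] assms
      unfolding B_def by (metis divide_pos_pos)
    from eventually_card_list_decodable_le[OF \<open>P > 0\<close> this]
    show "\<exists>M. \<forall>\<^sub>F n in sequentially. \<forall>C. list_decodable n P N (L - 1) C \<longrightarrow> card C \<le> M * exp (n * (B + e))"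
      by blast
  qed
  also have "B = 1/2 * ln ((real L - 1) * P / (real L * N))"
    using assms by (simp add: B_def field_simps)
  finally show ?thesis .
qed

end
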